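(* Let $P\in\mathbb{Q}_{\ge0}^{N\times N}$ be the transition matrix of a reversible and ergodic Markov chain on $V$ with stationary distribution $\pi$ and mixing rate $t^*$. For the rotor-router model on a multidigraph for $P$, with any initial configuration, $$\left|\chi^{(T)}_w-\mu^{(T)}_w\right|\le\frac{3\pi_w}{\pi_{\min}}\,t^*\,\Delta\,\bar\Delta$$ for all $w\in V$ and $T\ge0$.
   Context: Let $V=\{1,\dots,N\}$ and let $P\in\mathbb{Q}_{\ge 0}^{N\times N}$ be an ergodic (irreducible, aperiodic) stochastic matrix with stationary distribution $\pi$; $\pi_{\min}=\min_v\pi_v$; reversible means $\pi_uP_{u,v}=\pi_vP_{v,u}$ for all $u,v$. For $v\in V$ let $\mathcal N(v)=\{u: P_{v,u}>0\}$, $\delta(v)=|\mathcal N(v)|$, $\Delta=\max_v\delta(v)$. Total variation distance $d_{TV}(\xi,\zeta)=\frac12\|\xi-\zeta\|_1$; mixing time $\tau(\varepsilon)=\max_{v}\min\{t\ge0: d_{TV}(P^t_{v,\cdot},\pi)\le\varepsilon\}$; mixing rate $t^*=\tau(1/4)$. For each $v$ let $\bar\delta(v)$ be a positive integer with $\bar\delta(v)P_{v,u}\in\mathbb{Z}$ for all $u$, and $\bar\Delta=\max_v\bar\delta(v)$. The rotor router: $\sigma_v(0),\dots,\sigma_v(\bar\delta(v)-1)\in\mathcal N(v)$ is any sequence in which each $u\in\mathcal N(v)$ occurs exactly $\bar\delta(v)P_{v,u}$ times, extended by $\sigma_v(i)=\sigma_v(i\bmod\bar\delta(v))$. Write $I_{v,u}[z,z')=|\{j\in\{z,\dots,z'-1\}:\sigma_v(j)=u\}|$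 (zero if $z'\le z$). Given $\chi^{(0)}\in\mathbb{Z}_{\ge0}^N$, set $Z^{(t)}_{v,u}=I_{v,u}\big[\sum_{s=0}^{t-1}\chi^{(s)}_v,\sum_{s=0}^{t}\chi^{(s)}_v\big)$, $\chi^{(t+1)}_u=\sum_vZ^{(t)}_{v,u}$, $\mu^{(0)}=\chi^{(0)}$, $\mu^{(t)}=\mu^{(0)}P^t$. *)

theory Defs
  imports Complex_Main
begin

text \<open>States are the elements of a finite type 'v (playing the role of V = {1..N}).
  Matrices are functions 'v \<Rightarrow> 'v \<Rightarrow> real.\<close>

fun mpow :: "('v::finite \<Rightarrow> 'v \<Rightarrow> real) \<Rightarrow> nat \<Rightarrow> 'v \<Rightarrow> 'v \<Rightarrow> real" where
  "mpow P 0 u v = (if u = v then 1 else 0)"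
| "mpow P (Suc t) u v = (\<Sum>w\<in>UNIV. mpow P t u w * P w v)"

definition stochastic :: "('v::finite \<Rightarrow> 'v \<Rightarrow> real) \<Rightarrow> bool" where
  "stochastic P \<longleftrightarrow> (\<forall>u v. P u v \<ge> 0) \<and> (\<forall>u. (\<Sum>v\<in>UNIV. P u v) = 1)"

definition rational_matrix :: "('v::finite \<Rightarrow> 'v \<Rightarrow> real) \<Rightarrow> bool" where
  "rational_matrix P \<longleftrightarrow> (\<forall>u v. P u v \<in> \<rat>)"

definition irreducible_chain :: "('v::finite \<Rightarrow> 'v \<Rightarrow> real) \<Rightarrow> bool" where
  "irreducible_chain P \<longleftrightarrow> (\<forall>u v. \<exists>t>0. mpow P t u v > 0)"

definition aperiodic_chain :: "('v::finite \<Rightarrow> 'v \<Rightarrow> real) \<Rightarrow> bool" where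
  "aperiodic_chain P \<longleftrightarrow> (\<forall>v. Gcd {t. t > 0 \<and> mpow P t v v > 0} = (1::nat))"

definition ergodic :: "('v::finite \<Rightarrow> 'v \<Rightarrow> real) \<Rightarrow> bool" where
  "ergodic P \<longleftrightarrow> irreducible_chain P \<and> aperiodic_chain P"

definition stationary :: "('v::finite \<Rightarrow> 'v \<Rightarrow> real) \<Rightarrow> ('v \<Rightarrow> real) \<Rightarrow> bool" where
  "stationary P \<pi> \<longleftrightarrow> (\<forall>v. \<pi> v \<ge> 0) \<and> (\<Sum>v\<in>UNIV. \<pi> v) = 1 \<and>
     (\<forall>v. (\<Sum>u\<in>UNIV. \<pi> u * P u v) = \<pi> v)"

definition reversible :: "('v::finite \<Rightarrow> 'v \<Rightarrow> real) \<Rightarrow> ('v \<Rightarrow> real) \<Rightarrow> bool" where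
  "reversible P \<pi> \<longleftrightarrow> (\<forall>u v. \<pi> u * P u v = \<pi> v * P v u)"

definition pi_min :: "('v::finite \<Rightarrow> real) \<Rightarrow> real" where
  "pi_min \<pi> = Min (range \<pi>)"

definition d_TV :: "('v::finite \<Rightarrow> real) \<Rightarrow> ('v \<Rightarrow> real) \<Rightarrow> real" where
  "d_TV \<xi> \<zeta> = (1/2) * (\<Sum>v\<in>UNIV. \<bar>\<xi> v - \<zeta> v\<bar>)"

definition mixing_time :: "('v::finite \<Rightarrow> 'v \<Rightarrow> real) \<Rightarrow> ('v \<Rightarrow> real) \<Rightarrow> real \<Rightarrow> nat" where
  "mixing_time P \<pi> \<epsilon> = Max (range (\<lambda>v. LEAST t. d_TV (mpow P t v) \<pi> \<le> \<epsilon>))"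

definition mixing_rate :: "('v::finite \<Rightarrow> 'v \<Rightarrow> real) \<Rightarrow> ('v \<Rightarrow> real) \<Rightarrow> nat" where
  "mixing_rate P \<pi> = mixing_time P \<pi> (1/4)"

definition nbrs :: "('v::finite \<Rightarrow> 'v \<Rightarrow> real) \<Rightarrow> 'v \<Rightarrow> 'v set" where
  "nbrs P v = {u. P v u > 0}"

definition max_deg :: "('v::finite \<Rightarrow> 'v \<Rightarrow> real) \<Rightarrow> nat" where
  "max_deg P = Max (range (\<lambda>v. card (nbrs P v)))"

definition max_dbar :: "('v::finite \<Rightarrow> nat) \<Rightarrow> nat" where
  "max_dbar dbar = Max (range dbar)"

definition admissible_dbar :: "('v::finite \<Rightarrow> 'v \<Rightarrow> real) \<Rightarrow> ('v \<Rightarrow> nat) \<Rightarrow> bool" where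
  "admissible_dbar P dbar \<longleftrightarrow> (\<forall>v. dbar v > 0 \<and> (\<forall>u. real (dbar v) * P v u \<in> \<int>))"

definition rotor_seq :: "('v::finite \<Rightarrow> 'v \<Rightarrow> real) \<Rightarrow> ('v \<Rightarrow> nat) \<Rightarrow> ('v \<Rightarrow> nat \<Rightarrow> 'v) \<Rightarrow> bool" where
  "rotor_seq P dbar \<sigma> \<longleftrightarrow>
     (\<forall>v u. real (card {i. i < dbar v \<and> \<sigma> v i = u}) = real (dbar v) * P v u) \<and>
     (\<forall>v i. \<sigma> v i = \<sigma> v (i mod dbar v))"

definition I_cnt :: "('v \<Rightarrow> nat \<Rightarrow> 'v) \<Rightarrow> 'v \<Rightarrow> 'v \<Rightarrow> nat \<Rightarrow> nat \<Rightarrow> nat" where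
  "I_cnt \<sigma> v u z z' = card {j. z \<le> j \<and> j < z' \<and> \<sigma> v j = u}"

text \<open>State at time t: (\<chi>^{(t)}, \<lambda>v. \<Sum>_{s<t} \<chi>^{(s)}_v).\<close>
fun rr_state :: "('v::finite \<Rightarrow> nat \<Rightarrow> 'v) \<Rightarrow> ('v \<Rightarrow> nat) \<Rightarrow> nat \<Rightarrow> ('v \<Rightarrow> nat) \<times> ('v \<Rightarrow> nat)" where
  "rr_state \<sigma> \<chi>0 0 = (\<chi>0, (\<lambda>v. 0))"
| "rr_state \<sigma> \<chi>0 (Suc t) =
     (let (\<chi>, c) = rr_state \<sigma> \<chi>0 t in
       ((\<lambda>u. \<Sum>v\<in>UNIV. I_cnt \<sigma> v u (c v) (c v + \<chi> v)), (\<lambda>v. c v + \<chi> v)))"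

definition rr_chi :: "('v::finite \<Rightarrow> nat \<Rightarrow> 'v) \<Rightarrow> ('v \<Rightarrow> nat) \<Rightarrow> nat \<Rightarrow> 'v \<Rightarrow> nat" where
  "rr_chi \<sigma> \<chi>0 t = fst (rr_state \<sigma> \<chi>0 t)"

definition rr_mu :: "('v::finite \<Rightarrow> 'v \<Rightarrow> real) \<Rightarrow> ('v \<Rightarrow> nat) \<Rightarrow> nat \<Rightarrow> 'v \<Rightarrow> real" where
  "rr_mu P \<chi>0 t w = (\<Sum>v\<in>UNIV. real (\<chi>0 v) * mpow P t v w)"

end

theory Submission
  imports Defs
begin

text \<open>Between two steps the rotor router sends out of each vertex \<open>v\<close> exactly what the linear
  chain would, up to the rotor error: the deviation of the first \<open>z\<close> exits of the rotor at \<open>v\<close>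
  towards \<open>u\<close> from the ideal count \<open>z P(v,u)\<close>. Unrolling the recursion writes
  \<open>\<chi>(T) - \<mu>(T)\<close> as the increments of these errors propagated by powers of \<open>P\<close>. The errors are
  periodic in \<open>z\<close> with period \<open>dbar(v)\<close> and never exceed \<open>dbar(v)/4\<close>, so summation by parts
  bounds the discrepancy at \<open>w\<close> by \<open>\<Delta> dbar/4\<close> times the variation of the columns
  \<open>k \<mapsto> P\<^sup>k(u,w)\<close>, summed over the at most \<open>\<Delta>\<close> in-neighbours of each \<open>u\<close>. Reversibility turns the
  column variation into \<open>\<pi>(w)/\<pi>(u)\<close> times the variation of the row \<open>P\<^sup>k(w,\<cdot>)\<close>; since the
  \<open>\<ell>\<^sub>1\<close>-distance between rows of \<open>P\<^sup>k\<close> at least halves every \<open>t*\<close> steps, the latter is at most \<open>4 t*\<close>.\<close>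

section \<open>Powers of a stochastic matrix\<close>

lemma sum_mult_mpow_0: "(\<Sum>u\<in>UNIV. f u * mpow P 0 u w) = (f w :: real)"
  by (simp add: if_distrib[of "\<lambda>c. f _ * c"] cong: if_cong)

lemma sum_mpow_0_mult: "(\<Sum>u\<in>UNIV. mpow P 0 w u * f u) = (f w :: real)"
  by (simp add: if_distrib[of "\<lambda>c. c * f _"] cong: if_cong)

lemma mpow_add: "mpow P (a + b) x y = (\<Sum>z\<in>UNIV. mpow P a x z * mpow P b z y)"
proof (induction b arbitrary: y)
  case 0
  then show ?case by (simp only: sum_mult_mpow_0 add_0_right)
next
  case (Suc b)
  have "mpow P (a + Suc b) x y = (\<Sum>w\<in>UNIV. \<Sum>z\<in>UNIV. mpow P a x z * mpow P b z w * P w y)"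
    using Suc by (simp add: sum_distrib_right)
  also have "\<dots> = (\<Sum>z\<in>UNIV. mpow P a x z * (\<Sum>w\<in>UNIV. mpow P b z w * P w y))"
    by (subst sum.swap) (simp add: sum_distrib_left mult.assoc)
  finally show ?case by simp
qed

lemma mpow_Suc_left: "mpow P (Suc k) x y = (\<Sum>z\<in>UNIV. P x z * mpow P k z y)"
proof -
  have "mpow P 1 x z = P x z" for z
    using sum_mpow_0_mult[of P x "\<lambda>w. P w z"] by (simp only: One_nat_def mpow.simps(2))
  then show ?thesis using mpow_add[of P 1 k x y] by simp
qed

lemma stochastic_le_1:
  assumes "stochastic P" shows "P u v \<le> 1"
proof -
  have "P u v \<le> (\<Sum>v\<in>UNIV. P u v)"
    using assms by (intro member_le_sum) (auto simp: stochastic_def)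
  then show ?thesis using assms by (simp add: stochastic_def)
qed

lemma mpow_nonneg:
  assumes "stochastic P" shows "mpow P k x y \<ge> 0"
proof (induction k arbitrary: y)
  case (Suc k)
  have "P w y \<ge> 0" for w using assms by (simp add: stochastic_def)
  with Suc show ?case by (simp add: sum_nonneg)
qed simp

lemma mpow_row_sum:
  assumes "stochastic P" shows "(\<Sum>y\<in>UNIV. mpow P k x y) = 1"
proof (induction k)
  case (Suc k)
  have "(\<Sum>y\<in>UNIV. mpow P (Suc k) x y) = (\<Sum>w\<in>UNIV. mpow P k x w * (\<Sum>y\<in>UNIV. P w y))"
    by (simp add: sum_distrib_left) (rule sum.swap)
  with Suc assms show ?case by (simp add: stochastic_def)
qed simp

lemma mpow_add_ge:
  assumes "stochastic P" shows "mpow P (a + b) x y \<ge> mpow P a x z * mpow P b z y"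
  unfolding mpow_add by (rule member_le_sum) (auto intro!: mult_nonneg_nonneg mpow_nonneg assms)

lemma stationary_mpow:
  assumes "stationary P \<pi>" shows "(\<Sum>u\<in>UNIV. \<pi> u * mpow P t u v) = \<pi> v"
proof (induction t arbitrary: v)
  case 0
  then show ?case by (rule sum_mult_mpow_0)
next
  case (Suc t)
  have "(\<Sum>u\<in>UNIV. \<pi> u * mpow P (Suc t) u v) = (\<Sum>w\<in>UNIV. (\<Sum>u\<in>UNIV. \<pi> u * mpow P t u w) * P w v)"
    by (simp add: sum_distrib_left sum_distrib_right mult.assoc) (rule sum.swap)
  with Suc assms show ?case by (simp add: stationary_def)
qed

lemma reversible_mpow:
  assumes "reversible P \<pi>" shows "\<pi> u * mpow P k u w = \<pi> w * mpow P k w u"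
proof (induction k arbitrary: u w)
  case (Suc k)
  have "\<pi> u * mpow P (Suc k) u w = (\<Sum>m\<in>UNIV. (\<pi> u * mpow P k u m) * P m w)"
    by (simp add: sum_distrib_left mult.assoc)
  also have "\<dots> = (\<Sum>m\<in>UNIV. mpow P k m u * (\<pi> m * P m w))"
    using Suc by (simp add: mult.commute mult.left_commute)
  also have "\<dots> = (\<Sum>m\<in>UNIV. mpow P k m u * (\<pi> w * P w m))"
    using assms by (simp add: reversible_def)
  also have "\<dots> = \<pi> w * (\<Sum>m\<in>UNIV. P w m * mpow P k m u)"
    by (simp add: sum_distrib_left mult.commute mult.left_commute)
  also have "\<dots> = \<pi> w * mpow P (Suc k) w u"
    by (simp only: mpow_Suc_left)
  finally show ?case .
qed simp

lemma stationary_pos: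
  assumes "stationary P \<pi>" "irreducible_chain P" "stochastic P" shows "\<pi> v > 0"
proof -
  have nn: "\<And>u. \<pi> u \<ge> 0" using assms(1) by (simp add: stationary_def)
  have "\<not> (\<forall>u. \<pi> u \<le> 0)"
    using assms(1) sum_nonpos[of UNIV \<pi>] by (auto simp: stationary_def)
  then obtain u where "\<pi> u > 0" by (auto simp: not_le)
  moreover obtain t where "mpow P t u v > 0" using assms(2) by (auto simp: irreducible_chain_def)
  ultimately have "0 < \<pi> u * mpow P t u v" by simp
  also have "\<dots> \<le> (\<Sum>u\<in>UNIV. \<pi> u * mpow P t u v)"
    by (rule member_le_sum) (auto intro!: mult_nonneg_nonneg nn mpow_nonneg assms(3))
  finally show ?thesis using stationary_mpow[OF assms(1)] by simp
qed

lemma mpow_recurrence: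
  fixes x e :: "nat \<Rightarrow> 'v::finite \<Rightarrow> real"
  assumes step: "\<And>t u. x (Suc t) u = e t u + (\<Sum>v\<in>UNIV. x t v * P v u)"
  shows "x T w = (\<Sum>v\<in>UNIV. x 0 v * mpow P T v w) + (\<Sum>t<T. \<Sum>u\<in>UNIV. e t u * mpow P (T - Suc t) u w)"
proof (induction T arbitrary: w)
  case 0
  then show ?case by (simp add: sum_mult_mpow_0 del: mpow.simps)
next
  case (Suc T)
  have later: "(\<Sum>v\<in>UNIV. (\<Sum>u\<in>UNIV. e t u * mpow P (T - Suc t) u v) * P v w)
      = (\<Sum>u\<in>UNIV. e t u * mpow P (Suc T - Suc t) u w)" if "t < T" for t
  proof -
    have "Suc T - Suc t = Suc (T - Suc t)" using that by simp
    then show ?thesis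
      by (simp add: sum_distrib_left sum_distrib_right mult.assoc) (rule sum.swap)
  qed
  have now: "(\<Sum>u\<in>UNIV. e T u * mpow P (Suc T - Suc T) u w) = e T w"
    by (simp only: diff_self_eq_0 sum_mult_mpow_0)
  have "(\<Sum>v\<in>UNIV. (\<Sum>v'\<in>UNIV. x 0 v' * mpow P T v' v) * P v w) = (\<Sum>v\<in>UNIV. x 0 v * mpow P (Suc T) v w)"
    by (simp add: sum_distrib_left sum_distrib_right mult.assoc) (rule sum.swap)
  moreover have "(\<Sum>v\<in>UNIV. (\<Sum>t<T. \<Sum>u\<in>UNIV. e t u * mpow P (T - Suc t) u v) * P v w)
      = (\<Sum>t<T. \<Sum>u\<in>UNIV. e t u * mpow P (Suc T - Suc t) u w)"
  proof -
    have "(\<Sum>v\<in>UNIV. (\<Sum>t<T. \<Sum>u\<in>UNIV. e t u * mpow P (T - Suc t) u v) * P v w)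
        = (\<Sum>t<T. \<Sum>v\<in>UNIV. (\<Sum>u\<in>UNIV. e t u * mpow P (T - Suc t) u v) * P v w)"
      by (simp only: sum_distrib_right) (rule sum.swap)
    then show ?thesis by (simp add: later)
  qed
  ultimately show ?case
    by (simp only: step Suc distrib_right sum.distrib sum.lessThan_Suc now)
qed

section \<open>The rotor-router walk as a perturbed linear system\<close>

definition rotor_error :: "('v \<Rightarrow> 'v \<Rightarrow> real) \<Rightarrow> ('v \<Rightarrow> nat \<Rightarrow> 'v) \<Rightarrow> 'v \<Rightarrow> 'v \<Rightarrow> nat \<Rightarrow> real" where
  "rotor_error P \<sigma> v u z = (\<Sum>j\<in>{0..<z}. of_bool (\<sigma> v j = u) - P v u)"

lemma I_cnt_eq_rotor_error:
  "real (I_cnt \<sigma> v u a (a + x)) = rotor_error P \<sigma> v u (a + x) - rotor_error P \<sigma> v u a + real x * P v u"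
proof -
  have "{j. a \<le> j \<and> j < a + x \<and> \<sigma> v j = u} = {a..<a + x} \<inter> {j. \<sigma> v j = u}" by auto
  then have "real (I_cnt \<sigma> v u a (a + x)) - real x * P v u
      = (\<Sum>j\<in>{a..<a + x}. of_bool (\<sigma> v j = u) - P v u)"
    by (simp add: I_cnt_def sum_subtractf)
  also have "\<dots> = rotor_error P \<sigma> v u (a + x) - rotor_error P \<sigma> v u a"
    unfolding rotor_error_def by (simp add: sum.atLeastLessThan_concat[of 0 a "a + x", symmetric])
  finally show ?thesis by simp
qed

definition rr_departures :: "('v::finite \<Rightarrow> nat \<Rightarrow> 'v) \<Rightarrow> ('v \<Rightarrow> nat) \<Rightarrow> nat \<Rightarrow> 'v \<Rightarrow> nat" where
  "rr_departures \<sigma> \<chi>0 t = snd (rr_state \<sigma> \<chi>0 t)"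

lemma rr_chi_0: "rr_chi \<sigma> \<chi>0 0 = \<chi>0"
  by (simp add: rr_chi_def)

lemma rr_departures_0: "rr_departures \<sigma> \<chi>0 0 v = 0"
  by (simp add: rr_departures_def)

lemma rr_chi_Suc:
  "rr_chi \<sigma> \<chi>0 (Suc t) u = (\<Sum>v\<in>UNIV. I_cnt \<sigma> v u (rr_departures \<sigma> \<chi>0 t v)
     (rr_departures \<sigma> \<chi>0 t v + rr_chi \<sigma> \<chi>0 t v))"
  by (simp add: rr_chi_def rr_departures_def split_beta Let_def)

lemma rr_departures_Suc: "rr_departures \<sigma> \<chi>0 (Suc t) v = rr_departures \<sigma> \<chi>0 t v + rr_chi \<sigma> \<chi>0 t v"
  by (simp add: rr_chi_def rr_departures_def split_beta Let_def)

definition rr_error :: "('v::finite \<Rightarrow> 'v \<Rightarrow> real) \<Rightarrow> ('v \<Rightarrow> nat \<Rightarrow> 'v) \<Rightarrow> ('v \<Rightarrow> nat) \<Rightarrow> nat \<Rightarrow> 'v \<Rightarrow> real" where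
  "rr_error P \<sigma> \<chi>0 t u = (\<Sum>v\<in>UNIV. rotor_error P \<sigma> v u (rr_departures \<sigma> \<chi>0 (Suc t) v)
     - rotor_error P \<sigma> v u (rr_departures \<sigma> \<chi>0 t v))"

lemma rr_chi_Suc_eq:
  "real (rr_chi \<sigma> \<chi>0 (Suc t) u) = rr_error P \<sigma> \<chi>0 t u + (\<Sum>v\<in>UNIV. real (rr_chi \<sigma> \<chi>0 t v) * P v u)"
  unfolding rr_chi_Suc rr_error_def of_nat_sum rr_departures_Suc
  by (simp add: I_cnt_eq_rotor_error[where P = P] sum.distrib)

lemma rr_chi_eq_rr_mu_plus_errors:
  "real (rr_chi \<sigma> \<chi>0 T w)
     = rr_mu P \<chi>0 T w + (\<Sum>t<T. \<Sum>u\<in>UNIV. rr_error P \<sigma> \<chi>0 t u * mpow P (T - Suc t) u w)"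
  using mpow_recurrence[where x = "\<lambda>t u. real (rr_chi \<sigma> \<chi>0 t u)", OF rr_chi_Suc_eq]
  by (simp add: rr_mu_def rr_chi_0)

section \<open>Bounds on the rotor error\<close>

lemma rotor_error_period:
  assumes "rotor_seq P dbar \<sigma>"
  shows "rotor_error P \<sigma> v u (dbar v) = 0"
proof -
  have "{0..<dbar v} \<inter> {j. \<sigma> v j = u} = {i. i < dbar v \<and> \<sigma> v i = u}" by auto
  then have "(\<Sum>j\<in>{0..<dbar v}. (of_bool (\<sigma> v j = u)::real)) = real (dbar v) * P v u"
    using assms unfolding rotor_seq_def by simp
  then show ?thesis by (simp add: rotor_error_def sum_subtractf)
qed

lemma rotor_error_add_period:
  assumes "rotor_seq P dbar \<sigma>"
  shows "rotor_error P \<sigma> v u (z + dbar v) = rotor_error P \<sigma> v u z"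
proof (induction z)
  case 0 then show ?case using rotor_error_period[OF assms] by (simp add: rotor_error_def)
next
  case (Suc z)
  have "\<sigma> v (z + dbar v) = \<sigma> v z"
    using assms unfolding rotor_seq_def by (metis mod_add_self2)
  with Suc show ?case by (simp add: rotor_error_def)
qed

lemma rotor_error_mod:
  assumes "rotor_seq P dbar \<sigma>"
  shows "rotor_error P \<sigma> v u z = rotor_error P \<sigma> v u (z mod dbar v)"
proof (induction z rule: less_induct)
  case (less z)
  show ?case
  proof (cases "z < dbar v")
    case False
    then have "rotor_error P \<sigma> v u z = rotor_error P \<sigma> v u (z - dbar v)"
      using rotor_error_add_period[OF assms, of v u "z - dbar v"] by simp
    also have "\<dots> = rotor_error P \<sigma> v u (z mod dbar v)"
      using less[of "z - dbar v"] False by (cases "dbar v = 0") (simp_all add: le_mod_geq)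
    finally show ?thesis .
  qed simp
qed

lemma abs_le_of_convex_bounds:
  fixes a p r s :: real
  assumes "0 \<le> p" "p \<le> 1"
    and "a \<le> r * (1 - p)" "a \<le> s * p" "- (r * p) \<le> a" "- (s * (1 - p)) \<le> a"
  shows "\<bar>a\<bar> \<le> p * (1 - p) * (r + s)"
proof -
  have "a = p * a + (1 - p) * a" by algebra
  also have "\<dots> \<le> p * (r * (1 - p)) + (1 - p) * (s * p)"
    using assms by (intro add_mono mult_left_mono) auto
  finally have upper: "a \<le> p * (1 - p) * (r + s)" by (simp add: algebra_simps)
  have "- a = (1 - p) * (- a) + p * (- a)" by algebra
  also have "\<dots> \<le> (1 - p) * (r * p) + p * (s * (1 - p))"
    using assms by (intro add_mono mult_left_mono) auto
  finally have "- a \<le> p * (1 - p) * (r + s)" by (simp add: algebra_simps)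
  with upper show ?thesis by linarith
qed

lemma rotor_error_bound:
  assumes "rotor_seq P dbar \<sigma>" and "0 \<le> P v u" "P v u \<le> 1" and "dbar v > 0"
  shows "\<bar>rotor_error P \<sigma> v u z\<bar> \<le> P v u * (1 - P v u) * real (dbar v)"
proof -
  let ?g = "\<lambda>j. of_bool (\<sigma> v j = u) - P v u" and ?p = "P v u"
  define r where "r = z mod dbar v"
  have r: "r \<le> dbar v" using assms(4) by (simp add: r_def less_imp_le)
  have g: "- (real (card A) * ?p) \<le> sum ?g A" "sum ?g A \<le> real (card A) * (1 - ?p)" for A
    using sum_mono[of A "\<lambda>_. - ?p" ?g] sum_mono[of A ?g "\<lambda>_. 1 - ?p"] by auto
  have tail: "rotor_error P \<sigma> v u r = - (\<Sum>j\<in>{r..<dbar v}. ?g j)"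
    using rotor_error_period[OF assms(1), of v u] r
    by (simp add: rotor_error_def sum.atLeastLessThan_concat[of 0 r "dbar v", symmetric])
  have "\<bar>rotor_error P \<sigma> v u r\<bar> \<le> ?p * (1 - ?p) * (real r + real (dbar v - r))"
  proof (rule abs_le_of_convex_bounds[OF assms(2,3)])
    show "rotor_error P \<sigma> v u r \<le> real r * (1 - ?p)" "- (real r * ?p) \<le> rotor_error P \<sigma> v u r"
      unfolding rotor_error_def using g[of "{0..<r}"] by simp_all
    show "rotor_error P \<sigma> v u r \<le> real (dbar v - r) * ?p"
      "- (real (dbar v - r) * (1 - ?p)) \<le> rotor_error P \<sigma> v u r"
      unfolding tail using g[of "{r..<dbar v}"] by simp_all
  qed
  then show ?thesis using rotor_error_mod[OF assms(1), of v u z] r by (simp add: r_def)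
qed

lemma rotor_error_eq_0:
  assumes "rotor_seq P dbar \<sigma>" "dbar v > 0" "P v u = 0"
  shows "rotor_error P \<sigma> v u z = 0"
proof -
  have "card {i. i < dbar v \<and> \<sigma> v i = u} = 0"
    using assms(1,3) unfolding rotor_seq_def by (metis mult_zero_right of_nat_eq_0_iff)
  then have "\<sigma> v i \<noteq> u" if "i < dbar v" for i using that by auto
  then have "\<sigma> v j \<noteq> u" for j
    using assms(1,2) unfolding rotor_seq_def by (metis mod_less_divisor)
  then show ?thesis using assms(3) by (simp add: rotor_error_def)
qed

section \<open>The discrepancy in terms of the variation of \<open>P\<^sup>k\<close>\<close>

lemma summation_by_parts_rev:
  "(\<Sum>t<Suc n. (f (Suc t) - f t) * (a (n - t) :: real))
     = f (Suc n) * a 0 - f 0 * a n + (\<Sum>k<n. f (n - k) * (a (Suc k) - a k))"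
proof (induction n arbitrary: f)
  case 0 then show ?case by (simp add: algebra_simps)
next
  case (Suc n)
  have "(\<Sum>t<Suc (Suc n). (f (Suc t) - f t) * a (Suc n - t)) =
        (f 1 - f 0) * a (Suc n) + (\<Sum>t<Suc n. (f (Suc (Suc t)) - f (Suc t)) * a (n - t))"
    by (subst sum.lessThan_Suc_shift) simp
  also have "(\<Sum>t<Suc n. (f (Suc (Suc t)) - f (Suc t)) * a (n - t)) =
      f (Suc (Suc n)) * a 0 - f 1 * a n + (\<Sum>k<n. f (Suc (n - k)) * (a (Suc k) - a k))"
    using Suc.IH[where f = "\<lambda>t. f (Suc t)"] by simp
  also have "(\<Sum>k<n. f (Suc (n - k)) * (a (Suc k) - a k)) = (\<Sum>k<n. f (Suc n - k) * (a (Suc k) - a k))"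
    by (rule sum.cong) (auto simp: Suc_diff_le)
  finally show ?case by (simp add: algebra_simps)
qed

lemma abs_summation_by_parts_rev_le:
  assumes "f 0 = 0" "\<And>t. \<bar>f t\<bar> \<le> M"
  shows "\<bar>\<Sum>t<T. (f (Suc t) - f t) * (a (T - Suc t) :: real)\<bar>
           \<le> M * (\<bar>a 0\<bar> + (\<Sum>k<T. \<bar>a (Suc k) - a k\<bar>))"
proof (cases T)
  case 0
  then show ?thesis using assms(2)[of 0] by simp
next
  case (Suc n)
  have M: "M \<ge> 0" using assms(2)[of 0] by simp
  have "(\<Sum>t<T. (f (Suc t) - f t) * a (T - Suc t))
      = f (Suc n) * a 0 + (\<Sum>k<n. f (n - k) * (a (Suc k) - a k))"
    using summation_by_parts_rev[where f = f and n = n and a = a] assms(1) Suc by simp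
  moreover have "\<bar>f (Suc n) * a 0\<bar> \<le> M * \<bar>a 0\<bar>"
    using assms(2) by (simp add: abs_mult mult_right_mono)
  moreover have "\<bar>\<Sum>k<n. f (n - k) * (a (Suc k) - a k)\<bar> \<le> (\<Sum>k<n. M * \<bar>a (Suc k) - a k\<bar>)"
    by (rule order_trans[OF sum_abs]) (rule sum_mono, simp add: abs_mult mult_right_mono assms(2))
  moreover have "(\<Sum>k<n. M * \<bar>a (Suc k) - a k\<bar>) \<le> (\<Sum>k<T. M * \<bar>a (Suc k) - a k\<bar>)"
    using Suc M by (intro sum_mono2) auto
  ultimately show ?thesis by (simp add: sum_distrib_left[symmetric] distrib_left)
qed

lemma card_nbrs_le_max_deg: "card (nbrs P v) \<le> max_deg P"
  unfolding max_deg_def by (rule Max_ge) auto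

lemma dbar_le_max_dbar: "dbar v \<le> max_dbar dbar"
  unfolding max_dbar_def by (rule Max_ge) auto

lemma pi_min_le: "pi_min \<pi> \<le> \<pi> v"
  unfolding pi_min_def by (rule Min_le) auto

lemma pi_min_pos:
  assumes "\<And>v. \<pi> v > 0" shows "pi_min \<pi> > 0"
proof -
  have "pi_min \<pi> \<in> range \<pi>" unfolding pi_min_def by (rule Min_in) auto
  then show ?thesis using assms by auto
qed

lemma card_in_nbrs_le_max_deg:
  assumes "reversible P \<pi>" "\<And>v. \<pi> v > 0"
  shows "card {v. P v u > 0} \<le> max_deg P"
proof -
  have "{v. P v u > 0} \<subseteq> nbrs P u"
  proof
    fix v assume "v \<in> {v. P v u > 0}"
    then have "\<pi> u * P u v > 0"
      using assms unfolding reversible_def by (metis mem_Collect_eq mult_pos_pos)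
    then show "v \<in> nbrs P u"
      using assms(2)[of u] by (simp add: nbrs_def zero_less_mult_iff)
  qed
  then have "card {v. P v u > 0} \<le> card (nbrs P u)" by (intro card_mono) simp_all
  then show ?thesis using card_nbrs_le_max_deg[of P u] by linarith
qed

lemma reversible_mpow_diff_le:
  assumes "reversible P \<pi>" "\<And>v. \<pi> v > 0"
  shows "\<bar>mpow P (Suc k) u w - mpow P k u w\<bar>
           \<le> \<pi> w / pi_min \<pi> * \<bar>mpow P (Suc k) w u - mpow P k w u\<bar>"
proof -
  have pu: "\<pi> u > 0" by (rule assms(2))
  have "\<pi> u * (mpow P (Suc k) u w - mpow P k u w) = \<pi> w * (mpow P (Suc k) w u - mpow P k w u)"
    using reversible_mpow[OF assms(1), of u "Suc k" w] reversible_mpow[OF assms(1), of u k w]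
    by (simp add: right_diff_distrib)
  then have "\<pi> u * \<bar>mpow P (Suc k) u w - mpow P k u w\<bar> = \<pi> w * \<bar>mpow P (Suc k) w u - mpow P k w u\<bar>"
    using pu assms(2)[of w] by (metis abs_mult abs_of_pos)
  then have "\<bar>mpow P (Suc k) u w - mpow P k u w\<bar> = \<pi> w / \<pi> u * \<bar>mpow P (Suc k) w u - mpow P k w u\<bar>"
    using pu by (simp add: field_simps)
  also have "\<dots> \<le> \<pi> w / pi_min \<pi> * \<bar>mpow P (Suc k) w u - mpow P k w u\<bar>"
    using pi_min_pos[of \<pi>] assms(2) pi_min_le[of \<pi> u]
    by (intro mult_right_mono divide_left_mono) (auto simp: less_imp_le)
  finally show ?thesis .
qed

lemma sum_mpow_col_variation_le:
  assumes "reversible P \<pi>" "\<And>v. \<pi> v > 0"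
  shows "(\<Sum>u\<in>UNIV. \<bar>mpow P 0 u w\<bar> + (\<Sum>k<T. \<bar>mpow P (Suc k) u w - mpow P k u w\<bar>))
           \<le> 1 + \<pi> w / pi_min \<pi> * (\<Sum>k<T. \<Sum>z\<in>UNIV. \<bar>mpow P (Suc k) w z - mpow P k w z\<bar>)"
proof -
  have "(\<Sum>u\<in>UNIV. \<bar>mpow P 0 u w\<bar>) = 1"
    using sum_mult_mpow_0[of "\<lambda>_. 1" P w] by (simp add: if_distrib cong: if_cong)
  moreover have "(\<Sum>u\<in>UNIV. \<bar>mpow P (Suc k) u w - mpow P k u w\<bar>)
      \<le> \<pi> w / pi_min \<pi> * (\<Sum>z\<in>UNIV. \<bar>mpow P (Suc k) w z - mpow P k w z\<bar>)" for k
    unfolding sum_distrib_left by (intro sum_mono reversible_mpow_diff_le assms)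
  then have "(\<Sum>k<T. \<Sum>u\<in>UNIV. \<bar>mpow P (Suc k) u w - mpow P k u w\<bar>)
      \<le> \<pi> w / pi_min \<pi> * (\<Sum>k<T. \<Sum>z\<in>UNIV. \<bar>mpow P (Suc k) w z - mpow P k w z\<bar>)"
    unfolding sum_distrib_left by (rule sum_mono)
  moreover have "(\<Sum>u\<in>UNIV. \<Sum>k<T. \<bar>mpow P (Suc k) u w - mpow P k u w\<bar>)
      = (\<Sum>k<T. \<Sum>u\<in>UNIV. \<bar>mpow P (Suc k) u w - mpow P k u w\<bar>)"
    by (rule sum.swap)
  ultimately show ?thesis by (simp add: sum.distrib)
qed

lemma abs_rotor_error_le_max_dbar:
  assumes st: "stochastic P" and rs: "rotor_seq P dbar \<sigma>" and ad: "admissible_dbar P dbar"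
  shows "\<bar>rotor_error P \<sigma> v u z\<bar> \<le> real (max_dbar dbar) / 4"
proof -
  have "P v u * (1 - P v u) = 1 / 4 - (P v u - 1 / 2)\<^sup>2"
    by (simp add: power2_eq_square algebra_simps)
  then have "P v u * (1 - P v u) * real (dbar v) \<le> 1 / 4 * real (max_dbar dbar)"
    using dbar_le_max_dbar[of dbar v] by (intro mult_mono) auto
  moreover have "\<bar>rotor_error P \<sigma> v u z\<bar> \<le> P v u * (1 - P v u) * real (dbar v)"
    using rs st ad stochastic_le_1[OF st]
    by (intro rotor_error_bound) (auto simp: stochastic_def admissible_dbar_def)
  ultimately show ?thesis by simp
qed

lemma abs_sum_rotor_error_increments_le:
  assumes st: "stochastic P" and rs: "rotor_seq P dbar \<sigma>" and ad: "admissible_dbar P dbar"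
  shows "\<bar>\<Sum>t<T. (rotor_error P \<sigma> v u (rr_departures \<sigma> \<chi>0 (Suc t) v)
                 - rotor_error P \<sigma> v u (rr_departures \<sigma> \<chi>0 t v)) * a (T - Suc t)\<bar>
           \<le> of_bool (P v u > 0) * (real (max_dbar dbar) / 4 * (\<bar>a 0\<bar> + (\<Sum>k<T. \<bar>a (Suc k) - a k\<bar>)))"
proof (cases "P v u > 0")
  case True
  have "\<bar>\<Sum>t<T. (rotor_error P \<sigma> v u (rr_departures \<sigma> \<chi>0 (Suc t) v)
                 - rotor_error P \<sigma> v u (rr_departures \<sigma> \<chi>0 t v)) * a (T - Suc t)\<bar>
           \<le> real (max_dbar dbar) / 4 * (\<bar>a 0\<bar> + (\<Sum>k<T. \<bar>a (Suc k) - a k\<bar>))"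
    by (rule abs_summation_by_parts_rev_le[OF _ abs_rotor_error_le_max_dbar[OF st rs ad]])
      (simp add: rr_departures_0 rotor_error_def)
  with True show ?thesis by simp
next
  case False
  then have "P v u = 0" using st by (simp add: stochastic_def less_le)
  then have "rotor_error P \<sigma> v u z = 0" for z
    using rs ad by (intro rotor_error_eq_0) (auto simp: admissible_dbar_def)
  then show ?thesis using False by simp
qed

lemma rr_discrepancy_le:
  assumes st: "stochastic P" and rs: "rotor_seq P dbar \<sigma>" and ad: "admissible_dbar P dbar"
    and rv: "reversible P \<pi>" and pos: "\<And>v. \<pi> v > 0"
  shows "\<bar>real (rr_chi \<sigma> \<chi>0 T w) - rr_mu P \<chi>0 T w\<bar>
           \<le> real (max_dbar dbar) / 4 * real (max_deg P)
               * (1 + \<pi> w / pi_min \<pi> * (\<Sum>k<T. \<Sum>z\<in>UNIV. \<bar>mpow P (Suc k) w z - mpow P k w z\<bar>))"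
proof -
  define F where "F v u t = rotor_error P \<sigma> v u (rr_departures \<sigma> \<chi>0 t v)" for v u t
  define X where "X u = \<bar>mpow P 0 u w\<bar> + (\<Sum>k<T. \<bar>mpow P (Suc k) u w - mpow P k u w\<bar>)" for u
  define B where "B = real (max_dbar dbar) / 4"
  have "real (rr_chi \<sigma> \<chi>0 T w) - rr_mu P \<chi>0 T w
      = (\<Sum>t<T. \<Sum>u\<in>UNIV. \<Sum>v\<in>UNIV. (F v u (Suc t) - F v u t) * mpow P (T - Suc t) u w)"
    unfolding rr_chi_eq_rr_mu_plus_errors[where P = P] rr_error_def F_def by (simp add: sum_distrib_right)
  also have "\<dots> = (\<Sum>u\<in>UNIV. \<Sum>v\<in>UNIV. \<Sum>t<T. (F v u (Suc t) - F v u t) * mpow P (T - Suc t) u w)"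
    by (subst sum.swap) (rule sum.cong[OF refl], rule sum.swap)
  finally have split: "real (rr_chi \<sigma> \<chi>0 T w) - rr_mu P \<chi>0 T w = \<dots>" .
  have "\<bar>real (rr_chi \<sigma> \<chi>0 T w) - rr_mu P \<chi>0 T w\<bar>
      \<le> (\<Sum>u\<in>UNIV. \<Sum>v\<in>UNIV. of_bool (P v u > 0) * (B * X u))"
    unfolding split F_def X_def B_def
    by (intro order_trans[OF sum_abs] sum_mono order_trans[OF sum_abs]
        abs_sum_rotor_error_increments_le[OF st rs ad])
  also have "\<dots> = (\<Sum>u\<in>UNIV. real (card {v. P v u > 0}) * (B * X u))"
    by (simp add: sum_distrib_right[symmetric])
  also have "\<dots> \<le> (\<Sum>u\<in>UNIV. real (max_deg P) * (B * X u))"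
    using card_in_nbrs_le_max_deg[OF rv pos]
    by (intro sum_mono mult_right_mono) (auto simp: B_def X_def sum_nonneg)
  also have "\<dots> = B * real (max_deg P) * (\<Sum>u\<in>UNIV. X u)"
    by (simp add: sum_distrib_left mult.left_commute mult.assoc)
  also have "\<dots> \<le> B * real (max_deg P)
      * (1 + \<pi> w / pi_min \<pi> * (\<Sum>k<T. \<Sum>z\<in>UNIV. \<bar>mpow P (Suc k) w z - mpow P k w z\<bar>))"
    unfolding X_def by (intro mult_left_mono sum_mpow_col_variation_le rv pos) (simp add: B_def)
  finally show ?thesis by (simp add: B_def)
qed

section \<open>Geometric convergence of the rows of \<open>P\<^sup>k\<close>\<close>

lemma sum_mult_eq_sum_pairs:
  fixes p n Q :: "'a::finite \<Rightarrow> real"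
  assumes "sum n UNIV = sum p UNIV"
  shows "sum p UNIV * (\<Sum>x\<in>UNIV. (p x - n x) * Q x) = (\<Sum>x\<in>UNIV. \<Sum>y\<in>UNIV. p x * n y * (Q x - Q y))"
proof -
  have "(\<Sum>x\<in>UNIV. \<Sum>y\<in>UNIV. p x * n y * Q x) = (\<Sum>x\<in>UNIV. p x * Q x) * sum n UNIV"
    unfolding sum_product by (simp add: mult_ac)
  moreover have "(\<Sum>x\<in>UNIV. \<Sum>y\<in>UNIV. p x * n y * Q y) = sum p UNIV * (\<Sum>y\<in>UNIV. n y * Q y)"
    unfolding sum_product by (simp add: mult_ac)
  ultimately show ?thesis using assms
    by (simp add: right_diff_distrib left_diff_distrib sum_subtractf mult.commute)
qed

lemma sum_abs_mult_le_of_sum_eq_0: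
  fixes \<mu> :: "'a::finite \<Rightarrow> real" and Q :: "'a \<Rightarrow> 'b::finite \<Rightarrow> real"
  assumes "sum \<mu> UNIV = 0" and "\<And>x y. (\<Sum>z\<in>UNIV. \<bar>Q x z - Q y z\<bar>) \<le> B"
  shows "(\<Sum>z\<in>UNIV. \<bar>\<Sum>x\<in>UNIV. \<mu> x * Q x z\<bar>) \<le> (\<Sum>x\<in>UNIV. \<bar>\<mu> x\<bar>) / 2 * B"
proof -
  define p where "p x = max (\<mu> x) 0" for x
  define n where "n x = max (- \<mu> x) 0" for x
  define m where "m = sum p UNIV"
  have pn: "\<mu> x = p x - n x" and ab: "\<bar>\<mu> x\<bar> = p x + n x" and p0: "p x \<ge> 0" and n0: "n x \<ge> 0" for x
    unfolding p_def n_def by auto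
  have mn: "sum n UNIV = m"
    using assms(1) unfolding m_def pn by (simp add: sum_subtractf)
  have m0: "m \<ge> 0" unfolding m_def by (simp add: sum_nonneg p0)
  have "m * (\<Sum>x\<in>UNIV. \<mu> x * Q x z) = (\<Sum>x\<in>UNIV. \<Sum>y\<in>UNIV. p x * n y * (Q x z - Q y z))" for z
    using sum_mult_eq_sum_pairs[of n p "\<lambda>x. Q x z"] mn unfolding m_def pn by simp
  then have "m * \<bar>\<Sum>x\<in>UNIV. \<mu> x * Q x z\<bar> = \<bar>\<Sum>x\<in>UNIV. \<Sum>y\<in>UNIV. p x * n y * (Q x z - Q y z)\<bar>" for z
    using m0 by (metis abs_mult abs_of_nonneg)
  then have "m * (\<Sum>z\<in>UNIV. \<bar>\<Sum>x\<in>UNIV. \<mu> x * Q x z\<bar>) = (\<Sum>z\<in>UNIV. \<bar>\<Sum>x\<in>UNIV. \<Sum>y\<in>UNIV. p x * n y * (Q x z - Q y z)\<bar>)"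
    by (simp add: sum_distrib_left)
  also have "\<dots> \<le> (\<Sum>z\<in>UNIV. \<Sum>x\<in>UNIV. \<Sum>y\<in>UNIV. p x * n y * \<bar>Q x z - Q y z\<bar>)"
    using p0 n0 by (intro sum_mono order_trans[OF sum_abs]) (simp add: abs_mult)
  also have "\<dots> = (\<Sum>x\<in>UNIV. \<Sum>y\<in>UNIV. p x * n y * (\<Sum>z\<in>UNIV. \<bar>Q x z - Q y z\<bar>))"
    unfolding sum_distrib_left by (subst sum.swap) (rule sum.cong[OF refl], rule sum.swap)
  also have "\<dots> \<le> (\<Sum>x\<in>UNIV. \<Sum>y\<in>UNIV. p x * n y * B)"
    using assms(2) p0 n0 by (intro sum_mono mult_left_mono) auto
  also have "\<dots> = m * (m * B)"
    using mn unfolding m_def by (simp add: sum_distrib_left[symmetric] sum_distrib_right[symmetric])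
  finally have "m * (\<Sum>z\<in>UNIV. \<bar>\<Sum>x\<in>UNIV. \<mu> x * Q x z\<bar>) \<le> m * (m * B)" .
  moreover have "(\<Sum>x\<in>UNIV. \<bar>\<mu> x\<bar>) = 2 * m"
    unfolding ab sum.distrib mn m_def by simp
  moreover have "m = 0 \<Longrightarrow> \<mu> x = 0" for x
    using p0 n0 mn unfolding m_def pn by (simp add: sum_nonneg_eq_0_iff)
  ultimately show ?thesis using m0 by (cases "m = 0") simp_all
qed

definition row_dist :: "('v::finite \<Rightarrow> 'v \<Rightarrow> real) \<Rightarrow> nat \<Rightarrow> 'v \<Rightarrow> 'v \<Rightarrow> real" where
  "row_dist P k x y = (\<Sum>z\<in>UNIV. \<bar>mpow P k x z - mpow P k y z\<bar>)"

lemma row_dist_nonneg: "row_dist P k x y \<ge> 0"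
  unfolding row_dist_def by (simp add: sum_nonneg)

lemma row_dist_le_2:
  assumes "stochastic P" shows "row_dist P k x y \<le> 2"
proof -
  have "row_dist P k x y \<le> (\<Sum>z\<in>UNIV. mpow P k x z + mpow P k y z)"
    unfolding row_dist_def using mpow_nonneg[OF assms] by (intro sum_mono) (simp add: abs_le_iff)
  also have "\<dots> = 2" using mpow_row_sum[OF assms] by (simp add: sum.distrib)
  finally show ?thesis .
qed

lemma row_dist_add_le:
  assumes st: "stochastic P" and B: "\<And>x y. row_dist P t x y \<le> B"
  shows "row_dist P (s + t) x y \<le> row_dist P s x y / 2 * B"
proof -
  have "mpow P (s + t) x z - mpow P (s + t) y z = (\<Sum>m\<in>UNIV. (mpow P s x m - mpow P s y m) * mpow P t m z)" for z
    unfolding mpow_add by (simp add: left_diff_distrib sum_subtractf)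
  then have "row_dist P (s + t) x y = (\<Sum>z\<in>UNIV. \<bar>\<Sum>m\<in>UNIV. (mpow P s x m - mpow P s y m) * mpow P t m z\<bar>)"
    unfolding row_dist_def by simp
  also have "\<dots> \<le> row_dist P s x y / 2 * B"
    unfolding row_dist_def
  proof (rule sum_abs_mult_le_of_sum_eq_0)
    show "(\<Sum>m\<in>UNIV. mpow P s x m - mpow P s y m) = 0"
      using mpow_row_sum[OF st] by (simp add: sum_subtractf)
    show "(\<Sum>z\<in>UNIV. \<bar>mpow P t x' z - mpow P t y' z\<bar>) \<le> B" for x' y'
      using B unfolding row_dist_def .
  qed
  finally show ?thesis .
qed

lemma row_dist_geometric:
  assumes st: "stochastic P" and B: "\<And>x y. row_dist P s x y \<le> 2 * \<theta>"
  shows "row_dist P (j * s + r) x y \<le> 2 * \<theta> ^ j"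
proof (induction j arbitrary: x y)
  case 0 then show ?case using row_dist_le_2[OF st] by simp
next
  case (Suc j)
  have \<theta>: "\<theta> \<ge> 0" using B[of x y] row_dist_nonneg[of P s x y] by linarith
  have "row_dist P (Suc j * s + r) x y = row_dist P (s + (j * s + r)) x y" by (simp add: add.assoc)
  also have "\<dots> \<le> row_dist P s x y / 2 * (2 * \<theta> ^ j)" by (rule row_dist_add_le[OF st Suc])
  also have "\<dots> \<le> \<theta> * (2 * \<theta> ^ j)" using B[of x y] \<theta> by (intro mult_right_mono) auto
  finally show ?case by simp
qed

lemma sum_abs_diff_convex_le:
  fixes \<omega> :: "'a::finite \<Rightarrow> real"
  assumes "\<And>x. \<omega> x \<ge> 0" "sum \<omega> UNIV = 1"
  shows "(\<Sum>z\<in>(UNIV::'b::finite set). \<bar>f z - (\<Sum>x\<in>UNIV. \<omega> x * g x z)\<bar>)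
           \<le> (\<Sum>x\<in>UNIV. \<omega> x * (\<Sum>z\<in>UNIV. \<bar>f z - g x z\<bar>))"
proof -
  have "f z - (\<Sum>x\<in>UNIV. \<omega> x * g x z) = (\<Sum>x\<in>UNIV. \<omega> x * (f z - g x z))" for z
    using assms(2) by (simp add: right_diff_distrib sum_subtractf sum_distrib_right[symmetric])
  then have "(\<Sum>z\<in>(UNIV::'b set). \<bar>f z - (\<Sum>x\<in>UNIV. \<omega> x * g x z)\<bar>)
      \<le> (\<Sum>z\<in>UNIV. \<Sum>x\<in>UNIV. \<omega> x * \<bar>f z - g x z\<bar>)"
    using assms(1) by (auto intro!: sum_mono order_trans[OF sum_abs] simp: abs_mult)
  also have "\<dots> = (\<Sum>x\<in>UNIV. \<omega> x * (\<Sum>z\<in>UNIV. \<bar>f z - g x z\<bar>))"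
    unfolding sum_distrib_left by (rule sum.swap)
  finally show ?thesis .
qed

lemma sum_abs_mpow_Suc_diff_le:
  assumes st: "stochastic P" and B: "\<And>x. row_dist P k w x \<le> B"
  shows "(\<Sum>z\<in>UNIV. \<bar>mpow P (Suc k) w z - mpow P k w z\<bar>) \<le> B"
proof -
  have "(\<Sum>z\<in>UNIV. \<bar>mpow P (Suc k) w z - mpow P k w z\<bar>)
      = (\<Sum>z\<in>UNIV. \<bar>mpow P k w z - (\<Sum>x\<in>UNIV. P w x * mpow P k x z)\<bar>)"
    unfolding mpow_Suc_left by (simp add: abs_minus_commute)
  also have "\<dots> \<le> (\<Sum>x\<in>UNIV. P w x * row_dist P k w x)"
    unfolding row_dist_def using st by (intro sum_abs_diff_convex_le) (auto simp: stochastic_def)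
  also have "\<dots> \<le> (\<Sum>x\<in>UNIV. P w x * B)"
    using B st by (intro sum_mono mult_left_mono) (auto simp: stochastic_def)
  also have "\<dots> = B" using st by (simp add: sum_distrib_right[symmetric] stochastic_def)
  finally show ?thesis .
qed

lemma d_TV_mpow_Suc_le:
  assumes st: "stochastic P" and sp: "stationary P \<pi>"
  shows "d_TV (mpow P (Suc k) v) \<pi> \<le> d_TV (mpow P k v) \<pi>"
proof -
  have "mpow P (Suc k) v z - \<pi> z = (\<Sum>m\<in>UNIV. (mpow P k v m - \<pi> m) * P m z)" for z
    using sp unfolding stationary_def by (simp add: left_diff_distrib sum_subtractf)
  then have "(\<Sum>z\<in>UNIV. \<bar>mpow P (Suc k) v z - \<pi> z\<bar>) \<le> (\<Sum>z\<in>UNIV. \<Sum>m\<in>UNIV. \<bar>mpow P k v m - \<pi> m\<bar> * P m z)"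
    using st by (auto intro!: sum_mono order_trans[OF sum_abs] simp: abs_mult stochastic_def)
  also have "\<dots> = (\<Sum>m\<in>UNIV. \<bar>mpow P k v m - \<pi> m\<bar>)"
    using st by (subst sum.swap) (simp add: sum_distrib_left[symmetric] stochastic_def)
  finally show ?thesis unfolding d_TV_def by simp
qed

lemma d_TV_mpow_antimono:
  assumes "stochastic P" "stationary P \<pi>" "k \<le> k'"
  shows "d_TV (mpow P k' v) \<pi> \<le> d_TV (mpow P k v) \<pi>"
  using lift_Suc_antimono_le[of "\<lambda>k. d_TV (mpow P k v) \<pi>", OF d_TV_mpow_Suc_le[OF assms(1,2)] assms(3)] .

lemma d_TV_mpow_le_row_dist:
  assumes st: "stochastic P" and sp: "stationary P \<pi>" and B: "\<And>y. row_dist P t v y \<le> B"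
  shows "2 * d_TV (mpow P t v) \<pi> \<le> B"
proof -
  have "2 * d_TV (mpow P t v) \<pi> = (\<Sum>z\<in>UNIV. \<bar>mpow P t v z - (\<Sum>y\<in>UNIV. \<pi> y * mpow P t y z)\<bar>)"
    unfolding d_TV_def stationary_mpow[OF sp] by simp
  also have "\<dots> \<le> (\<Sum>y\<in>UNIV. \<pi> y * row_dist P t v y)"
    unfolding row_dist_def using sp by (intro sum_abs_diff_convex_le) (auto simp: stationary_def)
  also have "\<dots> \<le> (\<Sum>y\<in>UNIV. \<pi> y * B)"
    using B sp by (intro sum_mono mult_left_mono) (auto simp: stationary_def)
  also have "\<dots> = B" using sp by (simp add: sum_distrib_right[symmetric] stationary_def)
  finally show ?thesis .
qed

lemma row_dist_le_d_TV:
  "row_dist P t x y \<le> 2 * d_TV (mpow P t x) \<pi> + 2 * d_TV (mpow P t y) \<pi>"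
proof -
  have "row_dist P t x y \<le> (\<Sum>z\<in>UNIV. \<bar>mpow P t x z - \<pi> z\<bar> + \<bar>mpow P t y z - \<pi> z\<bar>)"
    unfolding row_dist_def by (intro sum_mono) linarith
  then show ?thesis unfolding d_TV_def by (simp add: sum.distrib)
qed

section \<open>Mixing of ergodic chains\<close>

lemma add_closed_add_mult_mem:
  fixes S :: "nat set"
  assumes "\<And>a b. a \<in> S \<Longrightarrow> b \<in> S \<Longrightarrow> a + b \<in> S" "x \<in> S" "y \<in> S"
  shows "x + q * y \<in> S"
proof (induction q)
  case (Suc q)
  then show ?case using assms(1)[OF Suc assms(3)] by (simp add: add_ac)
qed (simp add: assms(2))

lemma add_closed_Gcd_1_consecutive:
  fixes S :: "nat set"
  assumes add: "\<And>a b. a \<in> S \<Longrightarrow> b \<in> S \<Longrightarrow> a + b \<in> S" and "0 \<notin> S" and "Gcd S = 1"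
  shows "\<exists>b. b \<in> S \<and> Suc b \<in> S"
proof -
  define D where "D = {k. k > 0 \<and> (\<exists>b\<in>S. b + k \<in> S)}"
  obtain s where s: "s \<in> S" using assms(3) by fastforce
  with assms(2) have "s > 0" by (metis gr0I)
  with s have "s \<in> D" using add[OF s s] unfolding D_def by blast
  define m where "m = (LEAST k. k \<in> D)"
  have "m \<in> D" unfolding m_def using \<open>s \<in> D\<close> by (rule LeastI)
  then obtain b where b: "b \<in> S" "b + m \<in> S" and m0: "m > 0" unfolding D_def by auto
  \<comment> \<open>A non-zero residue of an element modulo \<open>m\<close> would be a smaller positive difference.\<close>
  have "m dvd x" if x: "x \<in> S" for x
  proof (rule ccontr)
    assume "\<not> m dvd x"
    have eq: "x + x div m * (b + m) + x mod m = x + x + x div m * b"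
      using mod_mult_div_eq[of x m] by (simp add: algebra_simps)
    have "x mod m \<in> D"
      unfolding D_def
    proof (intro CollectI conjI bexI)
      show "0 < x mod m" using \<open>\<not> m dvd x\<close> by (simp add: dvd_eq_mod_eq_0)
      show "x + x div m * (b + m) \<in> S" by (rule add_closed_add_mult_mem[OF add x b(2)])
      show "x + x div m * (b + m) + x mod m \<in> S"
        by (subst eq) (rule add_closed_add_mult_mem[OF add add[OF x x] b(1)])
    qed
    then have "m \<le> x mod m" unfolding m_def by (rule Least_le)
    with m0 show False using mod_less_divisor[OF m0, of x] by linarith
  qed
  then have "m dvd Gcd S" by (rule Gcd_greatest)
  with b assms(3) show ?thesis by auto
qed

lemma add_closed_eventually_mem:
  fixes S :: "nat set"
  assumes add: "\<And>a b. a \<in> S \<Longrightarrow> b \<in> S \<Longrightarrow> a + b \<in> S" and b: "b \<in> S" "Suc b \<in> S" "b > 0"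
    and n: "b * b \<le> n"
  shows "n \<in> S"
proof -
  define q where "q = n div b"
  define r where "r = n mod b"
  have "b \<le> q" unfolding q_def using div_le_mono[OF n, of b] b(3) by simp
  moreover have "r < b" unfolding r_def using b(3) by simp
  ultimately obtain d where "q = Suc (r + d)" using less_imp_Suc_add by fastforce
  then have "n = b + d * b + r * Suc b"
    using mod_mult_div_eq[of n b] unfolding q_def[symmetric] r_def[symmetric] by (simp add: algebra_simps)
  moreover have "b + d * b \<in> S" by (rule add_closed_add_mult_mem[OF add b(1) b(1)])
  ultimately show ?thesis
    using add_closed_add_mult_mem[OF add _ b(2), of "b + d * b" r] by simp
qed

lemma ergodic_mpow_diag_eventually_pos:
  assumes st: "stochastic P" and er: "ergodic P"
  shows "\<exists>n0. \<forall>n\<ge>n0. mpow P n v v > 0"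
proof -
  let ?S = "{t. 0 < t \<and> mpow P t v v > 0}"
  have add: "a + b \<in> ?S" if "a \<in> ?S" "b \<in> ?S" for a b
    using that mpow_add_ge[OF st, where a = a and b = b and x = v and y = v and z = v]
    by (auto intro: less_le_trans[OF mult_pos_pos])
  have "Gcd ?S = 1" using er unfolding ergodic_def aperiodic_chain_def by blast
  then obtain b where "b \<in> ?S" "Suc b \<in> ?S"
    using add_closed_Gcd_1_consecutive[of ?S] add by auto
  then have "n \<in> ?S" if "b * b \<le> n" for n
    using add_closed_eventually_mem[of ?S b n] add that by auto
  then show ?thesis by blast
qed

lemma ergodic_mpow_pos:
  assumes st: "stochastic P" and er: "ergodic P"
  shows "\<exists>r. \<forall>x y. mpow P r x y > 0"
proof -
  obtain N where N: "\<And>v n. N v \<le> n \<Longrightarrow> mpow P n v v > 0"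
    using ergodic_mpow_diag_eventually_pos[OF st er] by metis
  obtain A where A: "\<And>x y. mpow P (A x y) x y > 0"
    using er unfolding ergodic_def irreducible_chain_def by metis
  define R where "R = (\<Sum>p\<in>UNIV. A (fst p) (snd p)) + (\<Sum>v\<in>UNIV. N v)"
  have "mpow P R x y > 0" for x y
  proof -
    have "A x y \<le> (\<Sum>p\<in>UNIV. A (fst p) (snd p))"
      using member_le_sum[of "(x, y)" UNIV "\<lambda>p. A (fst p) (snd p)"] by simp
    moreover have "N y \<le> (\<Sum>v\<in>UNIV. N v)" by (rule member_le_sum) auto
    ultimately have R: "R = A x y + (R - A x y)" "N y \<le> R - A x y" unfolding R_def by auto
    have "0 < mpow P (A x y) x y * mpow P (R - A x y) y y" using A N R(2) by simp
    also have "\<dots> \<le> mpow P R x y" using mpow_add_ge[OF st, where a = "A x y" and b = "R - A x y" and x = x and y = y and z = y] R(1) by simp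
    finally show ?thesis .
  qed
  then show ?thesis by blast
qed

lemma row_dist_lt_2:
  assumes st: "stochastic P" and pos: "\<And>x y. mpow P r x y > 0"
  shows "row_dist P r x y < 2"
proof -
  have "row_dist P r x y < (\<Sum>z\<in>UNIV. mpow P r x z + mpow P r y z)"
    unfolding row_dist_def
  proof (rule sum_strict_mono_ex1)
    show "\<forall>z\<in>UNIV. \<bar>mpow P r x z - mpow P r y z\<bar> \<le> mpow P r x z + mpow P r y z"
      using mpow_nonneg[OF st] by (auto simp: abs_le_iff)
    show "\<exists>z\<in>UNIV. \<bar>mpow P r x z - mpow P r y z\<bar> < mpow P r x z + mpow P r y z"
      using pos[of x x] pos[of y x] by (intro bexI[of _ x]) (auto simp: abs_less_iff)
  qed simp
  also have "\<dots> = 2" using mpow_row_sum[OF st] by (simp add: sum.distrib)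
  finally show ?thesis .
qed

lemma ergodic_d_TV_le:
  assumes st: "stochastic P" and er: "ergodic P" and sp: "stationary P \<pi>" and "\<epsilon> > 0"
  shows "\<exists>K. \<forall>v. d_TV (mpow P K v) \<pi> \<le> \<epsilon>"
proof -
  obtain r where pos: "\<And>x y. mpow P r x y > 0" using ergodic_mpow_pos[OF st er] by blast
  define \<theta> where "\<theta> = Max (range (\<lambda>p. row_dist P r (fst p) (snd p))) / 2"
  have \<theta>: "row_dist P r x y \<le> 2 * \<theta>" for x y
    unfolding \<theta>_def by (simp add: Max_ge_iff) (metis fst_conv snd_conv order_refl)
  have "Max (range (\<lambda>p. row_dist P r (fst p) (snd p))) \<in> range (\<lambda>p. row_dist P r (fst p) (snd p))"
    by (rule Max_in) auto
  then have "\<theta> < 1" using row_dist_lt_2[OF st pos] by (auto simp: \<theta>_def)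
  then obtain j where j: "\<theta> ^ j < \<epsilon>" using real_arch_pow_inv[OF \<open>\<epsilon> > 0\<close>] by blast
  have "2 * d_TV (mpow P (j * r) v) \<pi> \<le> 2 * \<theta> ^ j" for v
    by (rule d_TV_mpow_le_row_dist[OF st sp]) (use row_dist_geometric[OF st \<theta>, of j 0] in simp)
  with j show ?thesis by (metis less_imp_le mult_le_cancel_left_pos order_trans zero_less_numeral)
qed

lemma d_TV_mixing_rate_le:
  assumes st: "stochastic P" and er: "ergodic P" and sp: "stationary P \<pi>"
  shows "d_TV (mpow P (mixing_rate P \<pi>) v) \<pi> \<le> 1/4"
proof -
  obtain K where "d_TV (mpow P K v) \<pi> \<le> 1/4" using ergodic_d_TV_le[OF st er sp, of "1/4"] by auto
  then have "d_TV (mpow P (LEAST t. d_TV (mpow P t v) \<pi> \<le> 1/4) v) \<pi> \<le> 1/4" by (rule LeastI)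
  moreover have "(LEAST t. d_TV (mpow P t v) \<pi> \<le> 1/4) \<le> mixing_rate P \<pi>"
    unfolding mixing_rate_def mixing_time_def by (rule Max_ge) auto
  ultimately show ?thesis using d_TV_mpow_antimono[OF st sp] by (meson order_trans)
qed

lemma singleton_of_mixing_rate_eq_0:
  fixes P :: "'v::finite \<Rightarrow> 'v \<Rightarrow> real"
  assumes st: "stochastic P" and er: "ergodic P" and sp: "stationary P \<pi>"
    and "mixing_rate P \<pi> = 0"
  shows "x = (y :: 'v)"
proof (rule ccontr)
  assume "x \<noteq> y"
  have bound: "\<bar>1 - \<pi> v\<bar> + \<bar>\<pi> u\<bar> \<le> 1/2" if "u \<noteq> v" for u v
  proof -
    have "(\<Sum>z\<in>{v, u}. \<bar>mpow P 0 v z - \<pi> z\<bar>) \<le> (\<Sum>z\<in>UNIV. \<bar>mpow P 0 v z - \<pi> z\<bar>)"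
      by (rule sum_mono2) auto
    with that d_TV_mixing_rate_le[OF st er sp, of v] assms(4) show ?thesis
      by (simp add: d_TV_def)
  qed
  have "\<bar>1 - \<pi> x\<bar> + \<bar>\<pi> y\<bar> \<le> 1/2" "\<bar>1 - \<pi> y\<bar> + \<bar>\<pi> x\<bar> \<le> 1/2"
    using bound \<open>x \<noteq> y\<close> by auto
  then show False by linarith
qed

lemma rr_chi_eq_rr_mu_of_singleton:
  fixes P :: "'v::finite \<Rightarrow> 'v \<Rightarrow> real"
  assumes st: "stochastic P" and single: "\<And>x y :: 'v. x = y"
  shows "real (rr_chi \<sigma> \<chi>0 T w) = rr_mu P \<chi>0 T w"
proof -
  have "P v u = 1" for v u
    using st single[of _ u] by (simp add: stochastic_def UNIV_eq_I[of "{u}"])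
  then have "rotor_error P \<sigma> v u z = 0" for v u z
    using single[of "\<sigma> v _" u] by (simp add: rotor_error_def)
  then show ?thesis by (simp add: rr_chi_eq_rr_mu_plus_errors[where P = P] rr_error_def)
qed

lemma sum_div_blocks:
  assumes "t > 0"
  shows "(\<Sum>k<t * m. f (k div t)) = real t * (\<Sum>j<m. f j)"
proof (induction m)
  case (Suc m)
  have "(\<Sum>k\<in>{t * m..<t * m + t}. f (k div t)) = (\<Sum>k\<in>{t * m..<t * m + t}. f m)"
  proof (intro sum.cong refl)
    fix k assume "k \<in> {t * m..<t * m + t}"
    then have "t * m \<le> k" "k < t * Suc m" by auto
    then show "f (k div t) = f m" by (simp add: div_nat_eqI)
  qed
  moreover have "(\<Sum>k<t * Suc m. f (k div t)) = (\<Sum>k<t * m. f (k div t)) + (\<Sum>k\<in>{t * m..<t * m + t}. f (k div t))"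
    by (simp add: lessThan_atLeast0 sum.atLeastLessThan_concat add.commute)
  ultimately show ?case using Suc by (simp add: algebra_simps)
qed simp

lemma sum_geometric_blocks_le:
  assumes "t > 0"
  shows "(\<Sum>k<T. (1/2 :: real) ^ (k div t)) \<le> 2 * real t"
proof -
  define m where "m = Suc (T div t)"
  have "T = t * (T div t) + T mod t" by simp
  then have "T \<le> t * m" unfolding m_def mult_Suc_right using mod_less_divisor[OF assms, of T] by linarith
  then have "(\<Sum>k<T. (1/2 :: real) ^ (k div t)) \<le> (\<Sum>k<t * m. (1/2) ^ (k div t))"
    by (intro sum_mono2) auto
  also have "\<dots> = real t * (\<Sum>j<m. (1/2) ^ j)" by (rule sum_div_blocks[OF assms])
  also have "\<dots> \<le> real t * 2"
    using geometric_sum_less[of "1/2 :: real" "{..<m}"] by (intro mult_left_mono) auto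
  finally show ?thesis by simp
qed

lemma sum_abs_mpow_Suc_diff_le_mixing_rate:
  assumes st: "stochastic P" and er: "ergodic P" and sp: "stationary P \<pi>"
    and t: "mixing_rate P \<pi> > 0"
  shows "(\<Sum>k<T. \<Sum>z\<in>UNIV. \<bar>mpow P (Suc k) w z - mpow P k w z\<bar>) \<le> 4 * real (mixing_rate P \<pi>)"
proof -
  let ?t = "mixing_rate P \<pi>"
  have half: "row_dist P ?t x y \<le> 2 * (1/2)" for x y
    using row_dist_le_d_TV[of P ?t x y \<pi>] d_TV_mixing_rate_le[OF st er sp, of x]
      d_TV_mixing_rate_le[OF st er sp, of y] by linarith
  then have "row_dist P k w x \<le> 2 * (1/2) ^ (k div ?t)" for k x
    using row_dist_geometric[OF st half, of "k div ?t" "k mod ?t" w x] by (simp only: div_mult_mod_eq)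
  then have "(\<Sum>k<T. \<Sum>z\<in>UNIV. \<bar>mpow P (Suc k) w z - mpow P k w z\<bar>) \<le> (\<Sum>k<T. 2 * (1/2) ^ (k div ?t))"
    by (intro sum_mono sum_abs_mpow_Suc_diff_le[OF st])
  also have "\<dots> \<le> 4 * real ?t"
    using sum_geometric_blocks_le[OF t, of T] by (simp add: sum_distrib_left[symmetric])
  finally show ?thesis .
qed

lemma rr_discrepancy_le_mixing_rate:
  assumes st: "stochastic P" and er: "ergodic P" and sp: "stationary P \<pi>" and rv: "reversible P \<pi>"
    and ad: "admissible_dbar P dbar" and rs: "rotor_seq P dbar \<sigma>" and t: "mixing_rate P \<pi> > 0"
  shows "\<bar>real (rr_chi \<sigma> \<chi>0 T w) - rr_mu P \<chi>0 T w\<bar>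
           \<le> 3 * \<pi> w / pi_min \<pi> * real (mixing_rate P \<pi>) * real (max_deg P) * real (max_dbar dbar)"
proof -
  have pos: "\<pi> v > 0" for v
    using stationary_pos[OF sp _ st] er by (simp add: ergodic_def)
  define r where "r = \<pi> w / pi_min \<pi>"
  define C where "C = real (max_dbar dbar) / 4 * real (max_deg P)"
  have "1 \<le> r" using pi_min_le[of \<pi> w] pi_min_pos[of \<pi>] pos by (simp add: r_def)
  then have "1 \<le> r * real (mixing_rate P \<pi>)" using t mult_mono[of 1 r 1] by fastforce
  have "\<bar>real (rr_chi \<sigma> \<chi>0 T w) - rr_mu P \<chi>0 T w\<bar>
      \<le> C * (1 + r * (\<Sum>k<T. \<Sum>z\<in>UNIV. \<bar>mpow P (Suc k) w z - mpow P k w z\<bar>))"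
    unfolding C_def r_def by (rule rr_discrepancy_le[OF st rs ad rv pos])
  also have "\<dots> \<le> C * (1 + r * (4 * real (mixing_rate P \<pi>)))"
    using sum_abs_mpow_Suc_diff_le_mixing_rate[OF st er sp t, where T = T and w = w] \<open>1 \<le> r\<close>
    by (intro mult_left_mono add_left_mono) (auto simp: C_def)
  also have "\<dots> \<le> C * (12 * (r * real (mixing_rate P \<pi>)))"
    using \<open>1 \<le> r * real (mixing_rate P \<pi>)\<close> by (intro mult_left_mono) (auto simp: C_def)
  finally show ?thesis by (simp add: C_def r_def mult_ac)
qed

theorem theorem5p9:
  fixes P :: "'v::finite \<Rightarrow> 'v \<Rightarrow> real"
    and \<pi> :: "'v \<Rightarrow> real"
    and dbar :: "'v \<Rightarrow> nat"
    and \<sigma> :: "'v \<Rightarrow> nat \<Rightarrow> 'v"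
    and \<chi>0 :: "'v \<Rightarrow> nat"
  assumes "stochastic P" and "rational_matrix P" and "ergodic P"
    and "stationary P \<pi>" and "reversible P \<pi>"
    and "admissible_dbar P dbar" and "rotor_seq P dbar \<sigma>"
  shows "\<forall>w T. \<bar>real (rr_chi \<sigma> \<chi>0 T w) - rr_mu P \<chi>0 T w\<bar>
           \<le> 3 * \<pi> w / pi_min \<pi> * real (mixing_rate P \<pi>) * real (max_deg P) * real (max_dbar dbar)"
proof (intro allI)
  fix w T
  show "\<bar>real (rr_chi \<sigma> \<chi>0 T w) - rr_mu P \<chi>0 T w\<bar>
    \<le> 3 * \<pi> w / pi_min \<pi> * real (mixing_rate P \<pi>) * real (max_deg P) * real (max_dbar dbar)"
  proof (cases "mixing_rate P \<pi> = 0")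
    case True
    with assms(1,3,4) have "\<And>x y :: 'v. x = y" by (rule singleton_of_mixing_rate_eq_0)
    with assms(1) show ?thesis by (simp add: True rr_chi_eq_rr_mu_of_singleton)
  next
    case False
    then show ?thesis by (intro rr_discrepancy_le_mixing_rate assms(1,3-7)) simp
  qed
qed

end
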